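(* Let $q$ be a prime power with $q\equiv 1 \pmod 3$, let $\delta\in\mathbb{F}_q$ be a cubic nonresidue, and let $\mathbb{F}_q(\delta^{1/3})$ be the cubic extension with $\mathbb{F}_q$-basis $\{1,\delta^{1/3},\delta^{2/3}\}$; write $\alpha=\alpha_1+\alpha_2\delta^{1/3}+\alpha_3\delta^{2/3}$ with $\alpha_i\in\mathbb{F}_q$. Let $\mathbb{H}_q=\{(\alpha,\beta)\in \mathbb{F}_q(\delta^{1/3})^2 : \alpha_2\beta_3-\alpha_3\beta_2\neq 0\}$ with the action of $\mathrm{GL}_3(\mathbb{F}_q)$ given by \[ \begin{bmatrix} a & b & c\\ d & e & f\\ r & s & t \end{bmatrix} (\alpha,\beta) = \left(\frac{a\alpha+b\beta+c}{r\alpha+s\beta+t}, \frac{d\alpha+e\beta+f}{r\alpha+s\beta+t} \right). \] Let $H$ be the subgroup \[H=\left\{\begin{bmatrix} x & y & 0\\ w & z & 0\\ 0 & 0 & t\end{bmatrix}\in\mathrm{GL}_3(\mathbb{F}_q)\right\}\cong \mathrm{GL}_2(\mathbb{F}_q)\times\mathbb{F}_q^\times\] (the centralizer in $\mathrm{GL}_3(\mathbb{F}_q)$ of $\mathrm{diag}(a,a,b)$ with $a\neq b$). Then the set \[\{(u+\delta^{1/3},\,v+\delta^{2/3}) : u,v\in\mathbb{F}_q\}\] is a fundamental domain for the action of $H$ on $\mathbb{H}_q$.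
   Context: A fundamental domain for the action of a subgroup $H$ on $\mathbb{H}_q$ is a subset of $\mathbb{H}_q$ containing exactly one element of each $H$-orbit. A cubic nonresidue is an element of $\mathbb{F}_q^\times$ that is not a cube in $\mathbb{F}_q$. *)

theory Defs
  imports "HOL-Analysis.Analysis"
begin

text \<open>Elements of the cubic extension F_q(delta^(1/3)) are represented by their
  coordinate triples (a1,a2,a3) w.r.t. the F_q-basis 1, delta^(1/3), delta^(2/3).\<close>

type_synonym 'a cub = "'a \<times> 'a \<times> 'a"

definition cubic_nonresidue :: "'a::field \<Rightarrow> bool" where
  "cubic_nonresidue d \<longleftrightarrow> d \<noteq> 0 \<and> \<not> (\<exists>x. x ^ 3 = d)"

definition cadd :: "'a::field cub \<Rightarrow> 'a cub \<Rightarrow> 'a cub" where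
  "cadd x y = (case x of (a1,a2,a3) \<Rightarrow> case y of (b1,b2,b3) \<Rightarrow> (a1+b1, a2+b2, a3+b3))"

definition csmult :: "'a::field \<Rightarrow> 'a cub \<Rightarrow> 'a cub" where
  "csmult c x = (case x of (a1,a2,a3) \<Rightarrow> (c*a1, c*a2, c*a3))"

definition cconst :: "'a::field \<Rightarrow> 'a cub" where
  "cconst c = (c, 0, 0)"

text \<open>Multiplication using (delta^(1/3))^3 = delta.\<close>
definition cmult :: "'a::field \<Rightarrow> 'a cub \<Rightarrow> 'a cub \<Rightarrow> 'a cub" where
  "cmult d x y = (case x of (a1,a2,a3) \<Rightarrow> case y of (b1,b2,b3) \<Rightarrow>
     (a1*b1 + d*(a2*b3 + a3*b2), a1*b2 + a2*b1 + d*(a3*b3), a1*b3 + a2*b2 + a3*b1))"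

definition cdiv :: "'a::field \<Rightarrow> 'a cub \<Rightarrow> 'a cub \<Rightarrow> 'a cub" where
  "cdiv d x y = (THE z. cmult d y z = x)"

definition Hq :: "('a::field cub \<times> 'a cub) set" where
  "Hq = {(\<alpha>, \<beta>). fst (snd \<alpha>) * snd (snd \<beta>) - snd (snd \<alpha>) * fst (snd \<beta>) \<noteq> 0}"

definition crow :: "'a::field ^3^3 \<Rightarrow> 3 \<Rightarrow> 'a cub \<Rightarrow> 'a cub \<Rightarrow> 'a cub" where
  "crow g i \<alpha> \<beta> = cadd (cadd (csmult (g$i$1) \<alpha>) (csmult (g$i$2) \<beta>)) (cconst (g$i$3))"

definition act :: "'a::field \<Rightarrow> 'a ^3^3 \<Rightarrow> 'a cub \<times> 'a cub \<Rightarrow> 'a cub \<times> 'a cub" where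
  "act d g p = (case p of (\<alpha>, \<beta>) \<Rightarrow>
     (cdiv d (crow g 1 \<alpha> \<beta>) (crow g 3 \<alpha> \<beta>), cdiv d (crow g 2 \<alpha> \<beta>) (crow g 3 \<alpha> \<beta>)))"

definition GL3 :: "('a::field ^3^3) set" where
  "GL3 = {g. invertible g}"

definition Hsub :: "('a::field ^3^3) set" where
  "Hsub = {g \<in> GL3. g$1$3 = 0 \<and> g$2$3 = 0 \<and> g$3$1 = 0 \<and> g$3$2 = 0}"

definition fundamental_domain ::
    "('g \<Rightarrow> 'x \<Rightarrow> 'x) \<Rightarrow> 'g set \<Rightarrow> 'x set \<Rightarrow> 'x set \<Rightarrow> bool" where
  "fundamental_domain f G X D \<longleftrightarrow> D \<subseteq> X \<and>
     (\<forall>x\<in>X. \<exists>!y\<in>D. \<exists>g\<in>G. f g x = y)"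

end

theory Submission
  imports Defs
begin

text \<open>An element of \<open>H\<close> has third row \<open>(0, 0, t)\<close>, so the denominator is a scalar and
  \<open>(\<alpha>, \<beta>) \<mapsto> ((x\<alpha> + y\<beta>)/t, (w\<alpha> + z\<beta>)/t)\<close> is \<open>\<bbbF>\<^sub>q\<close>-linear on coordinate vectors. Landing in the domain means that the rows \<open>(x, y)/t\<close>, \<open>(w, z)/t\<close> send the columns
  \<open>(a\<^sub>2, b\<^sub>2)\<close>, \<open>(a\<^sub>3, b\<^sub>3)\<close> of \<open>(\<alpha>, \<beta>)\<close> to \<open>(1, 0)\<close>, \<open>(0, 1)\<close>. As \<open>a\<^sub>2b\<^sub>3 - a\<^sub>3b\<^sub>2 \<noteq> 0\<close> on
  \<open>\<bbbH>\<^sub>q\<close>, Cramer's rule determines these rows and hence \<open>u, v\<close>, and they form an invertible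
  block, so a suitable element of \<open>H\<close> exists.\<close>

lemma cdiv_cconst:
  fixes t :: "'a::field"
  assumes "t \<noteq> 0"
  shows "cdiv d x (cconst t) = csmult (inverse t) x"
  unfolding cdiv_def
proof (rule the_equality)
  show "cmult d (cconst t) (csmult (inverse t) x) = x"
    using assms by (cases x) (simp add: cmult_def csmult_def cconst_def)
next
  fix z assume "cmult d (cconst t) z = x"
  then show "z = csmult (inverse t) x"
    using assms by (cases z) (auto simp: cmult_def csmult_def cconst_def)
qed

lemma det_block_diagonal_3:
  fixes g :: "'a::comm_ring_1^3^3"
  assumes "g$1$3 = 0" "g$2$3 = 0" "g$3$1 = 0" "g$3$2 = 0"
  shows "det g = g$3$3 * (g$1$1 * g$2$2 - g$1$2 * g$2$1)"
  using assms by (simp add: det_3 algebra_simps)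

lemma Hsub_iff:
  fixes g :: "'a::field^3^3"
  shows "g \<in> Hsub \<longleftrightarrow> g$1$3 = 0 \<and> g$2$3 = 0 \<and> g$3$1 = 0 \<and> g$3$2 = 0 \<and>
           g$3$3 \<noteq> 0 \<and> g$1$1 * g$2$2 - g$1$2 * g$2$1 \<noteq> 0"
  by (auto simp: Hsub_def GL3_def invertible_det_nz det_block_diagonal_3)

lemma csmult_cadd_csmult:
  "csmult c (cadd (csmult a x) (csmult b y)) = cadd (csmult (c * a) x) (csmult (c * b) y)"
  by (cases x; cases y) (simp add: cadd_def csmult_def algebra_simps)

lemma act_Hsub:
  assumes "(g::'a::field^3^3) \<in> Hsub"
  shows "act d g (\<alpha>, \<beta>) =
    (cadd (csmult (g$1$1 / g$3$3) \<alpha>) (csmult (g$1$2 / g$3$3) \<beta>),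
     cadd (csmult (g$2$1 / g$3$3) \<alpha>) (csmult (g$2$2 / g$3$3) \<beta>))"
proof -
  have g: "g$1$3 = 0" "g$2$3 = 0" "g$3$1 = 0" "g$3$2 = 0" "g$3$3 \<noteq> 0"
    using assms by (simp_all add: Hsub_iff)
  have "crow g 3 \<alpha> \<beta> = cconst (g$3$3)"
    using g by (cases \<alpha>; cases \<beta>) (simp add: crow_def cadd_def csmult_def cconst_def)
  moreover have "crow g i \<alpha> \<beta> = cadd (csmult (g$i$1) \<alpha>) (csmult (g$i$2) \<beta>)"
    if "g$i$3 = 0" for i
    using that by (cases \<alpha>; cases \<beta>) (simp add: crow_def cadd_def csmult_def cconst_def)
  ultimately show ?thesis
    using g by (simp add: act_def cdiv_cconst csmult_cadd_csmult divide_inverse mult.commute)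
qed

lemma cramer_rule_2:
  fixes a b c d :: "'a::field"
  assumes "a * d - b * c \<noteq> 0"
  shows "x * a + y * c = r \<and> x * b + y * d = s \<longleftrightarrow>
           x = (r * d - s * c) / (a * d - b * c) \<and> y = (s * a - r * b) / (a * d - b * c)"
  using assms by (auto simp: field_simps) algebra+

lemma act_Hsub_eq_normal_form_iff:
  fixes g :: "'a::field^3^3"
  assumes "g \<in> Hsub" and "a2 * b3 - a3 * b2 \<noteq> 0"
  defines "D \<equiv> a2 * b3 - a3 * b2"
  shows "act d g ((a1, a2, a3), (b1, b2, b3)) = ((u, 1, 0), (v, 0, 1)) \<longleftrightarrow>
           g$1$1 / g$3$3 = b3 / D \<and> g$1$2 / g$3$3 = - a3 / D \<and>
           g$2$1 / g$3$3 = - b2 / D \<and> g$2$2 / g$3$3 = a2 / D \<and>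
           u = (a1 * b3 - b1 * a3) / D \<and> v = (b1 * a2 - a1 * b2) / D"
proof -
  define x y w z where "x = g$1$1 / g$3$3" and "y = g$1$2 / g$3$3"
    and "w = g$2$1 / g$3$3" and "z = g$2$2 / g$3$3"
  have D: "D \<noteq> 0"
    using assms(2) by (simp add: D_def)
  have "act d g ((a1, a2, a3), (b1, b2, b3)) = ((u, 1, 0), (v, 0, 1)) \<longleftrightarrow>
          (x * a2 + y * b2 = 1 \<and> x * a3 + y * b3 = 0) \<and> x * a1 + y * b1 = u \<and>
          (w * a2 + z * b2 = 0 \<and> w * a3 + z * b3 = 1) \<and> w * a1 + z * b1 = v"
    by (auto simp: act_Hsub[OF assms(1)] cadd_def csmult_def x_def y_def w_def z_def)
  also have "\<dots> \<longleftrightarrow> (x = b3 / D \<and> y = - a3 / D) \<and> x * a1 + y * b1 = u \<and>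
                    (w = - b2 / D \<and> z = a2 / D) \<and> w * a1 + z * b1 = v"
    using cramer_rule_2[of a2 b3 a3 b2, OF assms(2)] by (simp add: D_def)
  also have "\<dots> \<longleftrightarrow> x = b3 / D \<and> y = - a3 / D \<and> w = - b2 / D \<and> z = a2 / D \<and>
                    u = (a1 * b3 - b1 * a3) / D \<and> v = (b1 * a2 - a1 * b2) / D"
    using D by (auto simp: diff_divide_distrib ac_simps)
  finally show ?thesis
    by (simp only: x_def y_def w_def z_def)
qed

theorem proposition4p1:
  fixes \<delta> :: "'a::{finite, field}"
  assumes "CARD('a) mod 3 = 1"
    and "cubic_nonresidue \<delta>"
  shows "fundamental_domain (act \<delta>) (Hsub :: ('a ^3^3) set) Hq
           {((u, 1, 0), (v, 0, 1)) | u v. True}"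
  unfolding fundamental_domain_def
proof (intro conjI ballI)
  show "{((u, 1, 0), (v, 0, 1)) | u v. True} \<subseteq> (Hq :: ('a cub \<times> 'a cub) set)"
    by (auto simp: Hq_def)
next
  fix p :: "'a cub \<times> 'a cub"
  assume "p \<in> Hq"
  then obtain a1 a2 a3 b1 b2 b3 where p: "p = ((a1, a2, a3), (b1, b2, b3))"
    and minor: "a2 * b3 - a3 * b2 \<noteq> 0"
    by (auto simp: Hq_def)
  define D where "D = a2 * b3 - a3 * b2"
  define g :: "'a^3^3"
    where "g = vector [vector [b3 / D, - a3 / D, 0], vector [- b2 / D, a2 / D, 0], vector [0, 0, 1]]"
  have "b3 / D * (a2 / D) - - a3 / D * (- b2 / D) = (a2 * b3 - a3 * b2) / (D * D)"
    by (simp add: diff_divide_distrib ac_simps)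
  then have "g \<in> Hsub"
    using minor by (simp add: Hsub_iff g_def vector_3 flip: D_def)
  moreover have "act \<delta> g p = ((u, 1, 0), (v, 0, 1)) \<longleftrightarrow>
                   u = (a1 * b3 - b1 * a3) / D \<and> v = (b1 * a2 - a1 * b2) / D" for u v
    using act_Hsub_eq_normal_form_iff[OF \<open>g \<in> Hsub\<close> minor] by (simp add: p g_def vector_3 D_def)
  moreover have "act \<delta> h p = ((u, 1, 0), (v, 0, 1)) \<Longrightarrow>
                   u = (a1 * b3 - b1 * a3) / D \<and> v = (b1 * a2 - a1 * b2) / D"
    if "h \<in> Hsub" for h u v
    using act_Hsub_eq_normal_form_iff[OF that minor] by (simp add: p D_def)
  ultimately show "\<exists>!y\<in>{((u, 1, 0), (v, 0, 1)) | u v. True}. \<exists>g\<in>Hsub. act \<delta> g p = y"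
    by blast
qed

end
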